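(* Let $G$ be a graph with vertex set $\{0,1,\dots,n\}$ and sink $0$, and let $c\in\mathbb{Z}_{\ge 0}^n$ be a stable configuration on $G$. Then $c$ is a minimal SR state if and only if there exists a sink-rooted orientation $\mathcal{O}$ of $G$ with $c_i=\mathrm{in}^{\mathcal{O}}_i$ for all $i\in\{1,\dots,n\}$; and $c$ is a minimal DR state if and only if there exists an acyclic sink-rooted orientation $\mathcal{O}$ of $G$ with $c_i=\mathrm{in}^{\mathcal{O}}_i$ for all $i\in\{1,\dots,n\}$. Moreover, in the SR case such an orientation is unique up to score-equivalence, and in the DR case it is unique.
   Context: A graph $G$ here is a finite, connected, undirected multigraph without loops (multiple edges allowed) with vertex set $\{0,1,\dots,n\}$; vertex $0$ is the sink; $\deg(i)$ is the degree of $i$ counting multiplicity. A configuration is $c=(c_1,\dots,c_n)\in\mathbb{Z}_{\ge0}^n$ ($c_i$ grains at vertex $i$; the sink carries no grains). Vertex $i\in[n]$ is stable if $c_i<\deg(i)$, and $c$ is stable if all $i\in[n]$ are stable. Abelian sandpile model (ASM): an unstable vertex $i$ topples deterministically by sending one grain along each incident edge (with multiplicity) to the other endpoint; grains sent to the sink disappear. Stochastic sandpile model (SSM), with fixed parameter $p\in(0,1)$: an unstable vertex $i$ topples stochastically: for each incident edge (with multiplicity) independently, with probability $p$ one grain moves from $i$ along that edge to the other endpoint (disappearing if it is the sink), otherwise it stays at $i$. Repeated toppling of unstable vertices almost surely reaches a stable configuration (the stabilisation). Each model defines a Markov chain on stable configurations: at each step add a grain at vertex $i$ with probability $\mu_i>0$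 (a fixed distribution on $[n]$) and stabilise. Recurrent states of the ASM chain are called DR (deterministically recurrent), those of the SSM chain SR (stochastically recurrent); these sets do not depend on $p$ or $\mu$. A recurrent state is minimal if it is minimal among recurrent states for the componentwise order $c\preceq c' \iff c_i\le c'_i\ \forall i$. An orientation $\mathcal{O}$ of $G$ assigns a direction to each edge (each copy of a multiple edge separately); $\mathrm{in}^{\mathcal{O}}_i$ is the number of edges directed into $i$. A root is a vertex all of whose edges are incoming; $\mathcal{O}$ is sink-rooted if the sink is its unique root; acyclic if it has no directed cycle. Two orientations are score-equivalent if they have the same in-degree at every vertex. Known facts: a stable $c$ is SR iff there exists a sink-rooted orientation $\mathcal{O}$ with $c_i\ge \mathrm{in}^{\mathcal{O}}_i$ for all $i\in[n]$, and DR iff such an orientation exists that is additionally acyclic. *)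

theory Defs
  imports Main
begin

text \<open>
A multigraph on vertex set {0..n} (sink 0) is given by a finite set E of edge
labels and an endpoint map ep :: 'e => nat * nat (the two endpoints of each edge
copy; the order of the pair carries no meaning). Multiple edges = several labels
with the same endpoints.
\<close>

definition adj_rel :: "'e set \<Rightarrow> ('e \<Rightarrow> nat \<times> nat) \<Rightarrow> (nat \<times> nat) set" where
  "adj_rel E ep = {(u, v). \<exists>e\<in>E. ep e = (u, v) \<or> ep e = (v, u)}"

definition valid_graph :: "nat \<Rightarrow> 'e set \<Rightarrow> ('e \<Rightarrow> nat \<times> nat) \<Rightarrow> bool" where
  "valid_graph n E ep \<longleftrightarrow> finite E
     \<and> (\<forall>e\<in>E. fst (ep e) \<le> n \<and> snd (ep e) \<le> n \<and> fst (ep e) \<noteq> snd (ep e))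
     \<and> (\<forall>v\<le>n. (0, v) \<in> (adj_rel E ep)\<^sup>*)"

definition incident :: "'e set \<Rightarrow> ('e \<Rightarrow> nat \<times> nat) \<Rightarrow> nat \<Rightarrow> 'e set" where
  "incident E ep i = {e\<in>E. fst (ep e) = i \<or> snd (ep e) = i}"

definition deg :: "'e set \<Rightarrow> ('e \<Rightarrow> nat \<times> nat) \<Rightarrow> nat \<Rightarrow> nat" where
  "deg E ep i = card (incident E ep i)"

definition other :: "('e \<Rightarrow> nat \<times> nat) \<Rightarrow> 'e \<Rightarrow> nat \<Rightarrow> nat" where
  "other ep e i = (if fst (ep e) = i then snd (ep e) else fst (ep e))"

definition is_config :: "nat \<Rightarrow> (nat \<Rightarrow> nat) \<Rightarrow> bool" where
  "is_config n c \<longleftrightarrow> (\<forall>i. (i = 0 \<or> n < i) \<longrightarrow> c i = 0)"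

definition stable :: "nat \<Rightarrow> 'e set \<Rightarrow> ('e \<Rightarrow> nat \<times> nat) \<Rightarrow> (nat \<Rightarrow> nat) \<Rightarrow> bool" where
  "stable n E ep c \<longleftrightarrow> is_config n c \<and> (\<forall>i\<in>{1..n}. c i < deg E ep i)"

text \<open>Vertex i sends one grain along each edge of S (S a set of edges incident to i);
grains reaching the sink disappear.\<close>
definition send_along :: "nat \<Rightarrow> ('e \<Rightarrow> nat \<times> nat) \<Rightarrow> nat \<Rightarrow> 'e set \<Rightarrow> (nat \<Rightarrow> nat) \<Rightarrow> (nat \<Rightarrow> nat)" where
  "send_along n ep i S c = (\<lambda>j. if j = 0 \<or> n < j then 0
      else c j - (if j = i then card S else 0) + card {e\<in>S. other ep e i = j})"

definition asm_topple :: "nat \<Rightarrow> 'e set \<Rightarrow> ('e \<Rightarrow> nat \<times> nat) \<Rightarrow> (nat \<Rightarrow> nat) \<Rightarrow> (nat \<Rightarrow> nat) \<Rightarrow> bool" where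
  "asm_topple n E ep c c' \<longleftrightarrow> (\<exists>i\<in>{1..n}. deg E ep i \<le> c i
      \<and> c' = send_along n ep i (incident E ep i) c)"

text \<open>SSM toppling: an unstable vertex sends a grain along each edge of some subset S
of its incident edges (each subset has positive probability since 0 < p < 1).\<close>
definition ssm_topple :: "nat \<Rightarrow> 'e set \<Rightarrow> ('e \<Rightarrow> nat \<times> nat) \<Rightarrow> (nat \<Rightarrow> nat) \<Rightarrow> (nat \<Rightarrow> nat) \<Rightarrow> bool" where
  "ssm_topple n E ep c c' \<longleftrightarrow> (\<exists>i\<in>{1..n}. deg E ep i \<le> c i
      \<and> (\<exists>S\<subseteq>incident E ep i. c' = send_along n ep i S c))"

text \<open>Positive-probability transitions of the chain: add a grain at some vertex
(all mu_i > 0) and stabilise.\<close>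
definition chain_step :: "((nat \<Rightarrow> nat) \<Rightarrow> (nat \<Rightarrow> nat) \<Rightarrow> bool) \<Rightarrow> nat \<Rightarrow> 'e set \<Rightarrow> ('e \<Rightarrow> nat \<times> nat)
    \<Rightarrow> (nat \<Rightarrow> nat) \<Rightarrow> (nat \<Rightarrow> nat) \<Rightarrow> bool" where
  "chain_step T n E ep c c' \<longleftrightarrow> (\<exists>i\<in>{1..n}. T\<^sup>*\<^sup>* (c(i := Suc (c i))) c' \<and> stable n E ep c')"

text \<open>Recurrent states of a finite Markov chain: stable states from which every
reachable state leads back.\<close>
definition recurrent :: "((nat \<Rightarrow> nat) \<Rightarrow> (nat \<Rightarrow> nat) \<Rightarrow> bool) \<Rightarrow> nat \<Rightarrow> 'e set \<Rightarrow> ('e \<Rightarrow> nat \<times> nat)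
    \<Rightarrow> (nat \<Rightarrow> nat) \<Rightarrow> bool" where
  "recurrent T n E ep c \<longleftrightarrow> stable n E ep c \<and>
     (\<forall>c'. (chain_step T n E ep)\<^sup>*\<^sup>* c c' \<longrightarrow> (chain_step T n E ep)\<^sup>*\<^sup>* c' c)"

definition DR :: "nat \<Rightarrow> 'e set \<Rightarrow> ('e \<Rightarrow> nat \<times> nat) \<Rightarrow> (nat \<Rightarrow> nat) \<Rightarrow> bool" where
  "DR n E ep c \<longleftrightarrow> recurrent (asm_topple n E ep) n E ep c"

definition SR :: "nat \<Rightarrow> 'e set \<Rightarrow> ('e \<Rightarrow> nat \<times> nat) \<Rightarrow> (nat \<Rightarrow> nat) \<Rightarrow> bool" where
  "SR n E ep c \<longleftrightarrow> recurrent (ssm_topple n E ep) n E ep c"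

text \<open>Minimality for the componentwise order (configs vanish outside {1..n}, so the
pointwise order on functions is the componentwise order).\<close>
definition minimal_in :: "((nat \<Rightarrow> nat) \<Rightarrow> bool) \<Rightarrow> (nat \<Rightarrow> nat) \<Rightarrow> bool" where
  "minimal_in P c \<longleftrightarrow> P c \<and> \<not> (\<exists>c'. P c' \<and> c' \<le> c \<and> c' \<noteq> c)"

text \<open>An orientation picks, for each edge copy, its head (one of its endpoints).\<close>
definition orientation :: "'e set \<Rightarrow> ('e \<Rightarrow> nat \<times> nat) \<Rightarrow> ('e \<Rightarrow> nat) \<Rightarrow> bool" where
  "orientation E ep h \<longleftrightarrow> (\<forall>e\<in>E. h e = fst (ep e) \<or> h e = snd (ep e))"

definition indeg :: "'e set \<Rightarrow> ('e \<Rightarrow> nat) \<Rightarrow> nat \<Rightarrow> nat" where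
  "indeg E h i = card {e\<in>E. h e = i}"

definition is_root :: "'e set \<Rightarrow> ('e \<Rightarrow> nat \<times> nat) \<Rightarrow> ('e \<Rightarrow> nat) \<Rightarrow> nat \<Rightarrow> bool" where
  "is_root E ep h v \<longleftrightarrow> (\<forall>e\<in>incident E ep v. h e = v)"

definition sink_rooted :: "nat \<Rightarrow> 'e set \<Rightarrow> ('e \<Rightarrow> nat \<times> nat) \<Rightarrow> ('e \<Rightarrow> nat) \<Rightarrow> bool" where
  "sink_rooted n E ep h \<longleftrightarrow> orientation E ep h \<and> is_root E ep h 0
     \<and> (\<forall>v\<in>{1..n}. \<not> is_root E ep h v)"

definition arcs :: "'e set \<Rightarrow> ('e \<Rightarrow> nat \<times> nat) \<Rightarrow> ('e \<Rightarrow> nat) \<Rightarrow> (nat \<times> nat) set" where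
  "arcs E ep h = {(other ep e (h e), h e) | e. e \<in> E}"

definition acyclic_orientation :: "'e set \<Rightarrow> ('e \<Rightarrow> nat \<times> nat) \<Rightarrow> ('e \<Rightarrow> nat) \<Rightarrow> bool" where
  "acyclic_orientation E ep h \<longleftrightarrow> acyclic (arcs E ep h)"

definition score_equiv :: "nat \<Rightarrow> 'e set \<Rightarrow> ('e \<Rightarrow> nat) \<Rightarrow> ('e \<Rightarrow> nat) \<Rightarrow> bool" where
  "score_equiv n E h1 h2 \<longleftrightarrow> (\<forall>v\<le>n. indeg E h1 v = indeg E h2 v)"

end

theory Submission
  imports Defs
begin

text \<open>
Recurrent states of either chain are the stable configurations reachable from the maximal stable
one, \<open>deg - 1\<close>. Every configuration reachable from it dominates the in-degrees of an orientation
rooted at the sink, acyclic in the abelian model: at \<open>deg - 1\<close> orient each edge towards the sink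
along breadth-first distances; adding grains keeps the domination, and firing a set of edges at
\<open>i\<close> is mirrored by turning those edges away from \<open>i\<close>, which keeps acyclicity when all edges of
\<open>i\<close> fire. For a stable configuration the orientation is sink-rooted, since another root would
have in-degree equal to its degree.

Conversely, by the abelian property it suffices to topple some configuration above \<open>deg - 1\<close>
down to the in-degree vector of a sink-rooted orientation \<open>h\<close>. In the stochastic model, process
the vertices by decreasing distance to the sink, each one first passing its excess grains towards
the sink and then firing all its edges except the in-edges from processed vertices. In the abelian
model, with \<open>h\<close> acyclic, start from \<open>indeg h + L r\<close> for a potential \<open>r\<close> that decreases steeply
along the arcs of \<open>h\<close>, and repeatedly topple a vertex of maximal remaining count whose
out-neighbours all have smaller counts.

The in-degrees of a sink-rooted orientation on \<open>[n]\<close> always sum to \<open>|E| - deg 0\<close>, which gives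
minimality. If two orientations with equal in-degrees disagree, the disagreeing edges contain a
cycle of the first, so an acyclic orientation is determined by its in-degrees.
\<close>

section \<open>Multigraphs, configurations and topplings\<close>

lemma sum_indicator_card: "finite A \<Longrightarrow> (\<Sum>e\<in>A. if P e then (1::int) else 0) = int (card {e\<in>A. P e})"
  by (simp add: sum.If_cases Int_def)

lemma config_outside: "is_config n c \<Longrightarrow> j \<notin> {1..n} \<Longrightarrow> c j = 0"
  unfolding is_config_def by (metis atLeastAtMost_iff leI less_one)

lemma config_eqI: "is_config n c \<Longrightarrow> is_config n d \<Longrightarrow> (\<And>j. j \<in> {1..n} \<Longrightarrow> c j = d j) \<Longrightarrow> c = d"
  by (metis config_outside ext)

lemma send_along_config: "is_config n (send_along n ep i S q)"
  unfolding is_config_def send_along_def by auto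

lemma send_along_other:
  "j \<in> {1..n} \<Longrightarrow> j \<noteq> i \<Longrightarrow> send_along n ep i S q j = q j + card {e \<in> S. other ep e i = j}"
  unfolding send_along_def by auto

lemma send_along_ge: "j \<noteq> i \<Longrightarrow> j \<in> {1..n} \<Longrightarrow> q j \<le> send_along n ep i S q j"
  unfolding send_along_def by auto

lemma send_along_add:
  assumes "is_config n p" "card S \<le> q i"
  shows "send_along n ep i S (\<lambda>j. q j + p j) = (\<lambda>j. send_along n ep i S q j + p j)"
  using assms unfolding send_along_def is_config_def by (auto simp: fun_eq_iff)

lemma send_along_commute:
  assumes "i \<noteq> k" "card Si \<le> q i" "card Sk \<le> q k"
  shows "send_along n ep i Si (send_along n ep k Sk q) = send_along n ep k Sk (send_along n ep i Si q)"
  using assms unfolding send_along_def by (auto simp: fun_eq_iff)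

locale sandpile_graph =
  fixes n :: nat and E :: "'e set" and ep :: "'e \<Rightarrow> nat \<times> nat"
  assumes valid: "valid_graph n E ep"
begin

lemma finite_edges: "finite E"
  using valid unfolding valid_graph_def by blast

lemma edge_endpoints: "e \<in> E \<Longrightarrow> fst (ep e) \<le> n \<and> snd (ep e) \<le> n \<and> fst (ep e) \<noteq> snd (ep e)"
  using valid unfolding valid_graph_def by blast

lemma incident_subset: "incident E ep i \<subseteq> E"
  unfolding incident_def by auto

lemma finite_incident: "finite (incident E ep i)"
  using finite_edges incident_subset finite_subset by blast

lemma card_le_deg: "S \<subseteq> incident E ep i \<Longrightarrow> card S \<le> deg E ep i"
  unfolding deg_def by (rule card_mono[OF finite_incident])

lemma deg_le_card_edges: "deg E ep i \<le> card E"
  unfolding deg_def using card_mono[OF finite_edges incident_subset] .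

context
  fixes e i assumes e: "e \<in> incident E ep i"
begin

lemma other_ne: "other ep e i \<noteq> i"
  using e edge_endpoints[of e] unfolding incident_def other_def by auto

lemma other_le: "other ep e i \<le> n"
  using e edge_endpoints[of e] unfolding incident_def other_def by auto

lemma incident_le: "i \<le> n"
  using e edge_endpoints[of e] unfolding incident_def by auto

lemma incident_other: "e \<in> incident E ep (other ep e i)"
  using e unfolding incident_def other_def by auto

lemma other_other: "other ep e (other ep e i) = i"
  using e edge_endpoints[of e] unfolding incident_def other_def by auto

end

lemma other_self_empty: "S \<subseteq> incident E ep i \<Longrightarrow> {e \<in> S. other ep e i = i} = {}"
  using other_ne by blast

lemma send_along_self:
  "i \<in> {1..n} \<Longrightarrow> S \<subseteq> incident E ep i \<Longrightarrow> send_along n ep i S q i = q i - card S"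
proof -
  assume "i \<in> {1..n}" "S \<subseteq> incident E ep i"
  moreover have "card {e \<in> S. other ep e i = i} = 0"
    using other_self_empty[OF \<open>S \<subseteq> incident E ep i\<close>] by (metis card.empty)
  ultimately show ?thesis unfolding send_along_def by simp
qed

lemma edges_between_sym:
  "j \<noteq> i \<Longrightarrow> {e \<in> incident E ep i. other ep e i = j} = {e \<in> incident E ep j. other ep e j = i}"
  using edge_endpoints unfolding incident_def other_def by auto

definition dist :: "nat \<Rightarrow> nat" where
  "dist v = (LEAST k. (0, v) \<in> adj_rel E ep ^^ k)"

lemma dist_zero: "dist 0 = 0"
  unfolding dist_def by (rule Least_eq_0) simp

lemma dist_path: "v \<le> n \<Longrightarrow> (0, v) \<in> adj_rel E ep ^^ dist v"
proof -
  assume "v \<le> n"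
  then have "(0, v) \<in> (adj_rel E ep)\<^sup>*" using valid unfolding valid_graph_def by blast
  then obtain k where "(0, v) \<in> adj_rel E ep ^^ k" using rtrancl_power by blast
  then show ?thesis unfolding dist_def by (rule LeastI)
qed

lemma parent_edge:
  assumes v: "v \<in> {1..n}"
  obtains e where "e \<in> incident E ep v" "dist (other ep e v) < dist v"
proof -
  have path: "(0, v) \<in> adj_rel E ep ^^ dist v" using dist_path v by auto
  then obtain m where m: "dist v = Suc m" using v by (cases "dist v") auto
  then obtain p where p: "(0, p) \<in> adj_rel E ep ^^ m" "(p, v) \<in> adj_rel E ep"
    using path by auto
  from p(2) obtain e where e: "e \<in> E" "ep e = (p, v) \<or> ep e = (v, p)"
    unfolding adj_rel_def by blast
  have "p \<noteq> v" using edge_endpoints[OF e(1)] e(2) by auto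
  then have "e \<in> incident E ep v" "other ep e v = p"
    using e unfolding incident_def other_def by (cases "ep e"; auto)+
  moreover have "dist p \<le> m" unfolding dist_def using p(1) by (rule Least_le)
  ultimately show ?thesis using that m by simp
qed

lemma deg_pos: "v \<in> {1..n} \<Longrightarrow> 0 < deg E ep v"
  using parent_edge finite_incident unfolding deg_def by (metis card_gt_0_iff empty_iff)

definition topple :: "(nat \<Rightarrow> 'e set \<Rightarrow> bool) \<Rightarrow> (nat \<Rightarrow> nat) \<Rightarrow> (nat \<Rightarrow> nat) \<Rightarrow> bool" where
  "topple A q q' \<longleftrightarrow> (\<exists>i\<in>{1..n}. deg E ep i \<le> q i
      \<and> (\<exists>S \<subseteq> incident E ep i. A i S \<and> q' = send_along n ep i S q))"

lemma asm_topple_eq: "asm_topple n E ep = topple (\<lambda>i S. S = incident E ep i)"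
  unfolding asm_topple_def topple_def by (auto simp: fun_eq_iff)

lemma ssm_topple_eq: "ssm_topple n E ep = topple (\<lambda>_ _. True)"
  unfolding ssm_topple_def topple_def by (auto simp: fun_eq_iff)

lemma toppleI:
  "i \<in> {1..n} \<Longrightarrow> deg E ep i \<le> q i \<Longrightarrow> S \<subseteq> incident E ep i \<Longrightarrow> A i S
     \<Longrightarrow> topple A q (send_along n ep i S q)"
  unfolding topple_def by blast

lemma stable_not_topple: "stable n E ep q \<Longrightarrow> \<not> topple A q q'"
  unfolding stable_def topple_def by force

lemma topple_relpowp_stable: "stable n E ep q \<Longrightarrow> (topple A ^^ k) q r \<Longrightarrow> r = q"
  using stable_not_topple by (cases k) (simp, metis relpowp_Suc_D2)

lemma unstable_vertex:
  assumes "is_config n q" "\<not> stable n E ep q"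
  obtains x where "x \<in> {1..n}" "deg E ep x \<le> q x"
  using assms unfolding stable_def by (auto simp: not_less)

text \<open>Topplings at distinct vertices commute, and toppling elsewhere keeps a vertex unstable;
  hence a vertex that is unstable now must topple in every stabilising sequence, and that
  toppling can be moved to the front.\<close>
lemma stabilisation_topples_first:
  "(topple A ^^ k) u r \<Longrightarrow> stable n E ep r \<Longrightarrow> x \<in> {1..n} \<Longrightarrow> deg E ep x \<le> u x \<Longrightarrow>
     \<exists>S k'. k = Suc k' \<and> S \<subseteq> incident E ep x \<and> A x S \<and> (topple A ^^ k') (send_along n ep x S u) r"
proof (induction k arbitrary: u)
  case 0
  then show ?case unfolding stable_def by force
next
  case (Suc k)
  from Suc.prems(1) obtain u1 where u1: "topple A u u1" "(topple A ^^ k) u1 r"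
    using relpowp_Suc_D2 by metis
  from u1(1) obtain y Sy where y: "y \<in> {1..n}" "deg E ep y \<le> u y" "Sy \<subseteq> incident E ep y" "A y Sy"
      and u1_def: "u1 = send_along n ep y Sy u"
    unfolding topple_def by blast
  show ?case
  proof (cases "y = x")
    case True
    then show ?thesis using y u1 u1_def by blast
  next
    case False
    have "u x \<le> u1 x" using u1_def send_along_ge Suc.prems(3) False by metis
    with Suc.prems have "deg E ep x \<le> u1 x" by linarith
    from Suc.IH[OF u1(2) Suc.prems(2,3) this] obtain S k' where
      S: "k = Suc k'" "S \<subseteq> incident E ep x" "A x S" "(topple A ^^ k') (send_along n ep x S u1) r"
      by blast
    let ?u' = "send_along n ep x S u"
    have "card S \<le> u x" "card Sy \<le> u y"
      using card_le_deg S(2) y(3) Suc.prems(4) y(2) by (meson le_trans)+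
    then have swap: "send_along n ep x S u1 = send_along n ep y Sy ?u'"
      using send_along_commute False u1_def by metis
    have "u y \<le> ?u' y" using send_along_ge y(1) False by metis
    then have "topple A ?u' (send_along n ep y Sy ?u')"
      using y by (intro toppleI) auto
    then have "(topple A ^^ Suc k') ?u' r"
      using S(4) swap by (metis relpowp_Suc_I2)
    then show ?thesis using S by blast
  qed
qed

text \<open>The abelian property: grains are added one at a time, and whenever the current
  configuration is unstable, the previous lemma supplies its next toppling.\<close>
lemma stabilisation_chain:
  "(topple A ^^ k) (\<lambda>j. q j + p j) r \<Longrightarrow> stable n E ep r \<Longrightarrow> is_config n q \<Longrightarrow> is_config n p \<Longrightarrow>
     \<exists>q'. stable n E ep q' \<and> (topple A)\<^sup>*\<^sup>* q q' \<and> (chain_step (topple A) n E ep)\<^sup>*\<^sup>* q' r"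
proof (induction "k + sum p {1..n}" arbitrary: k q p rule: less_induct)
  case less
  show ?case
  proof (cases "stable n E ep q")
    case False
    then obtain x where x: "x \<in> {1..n}" "deg E ep x \<le> q x"
      using unstable_vertex less.prems(3) by blast
    then have "deg E ep x \<le> q x + p x" by linarith
    from stabilisation_topples_first[OF less.prems(1,2) x(1) this] obtain S k' where
      S: "k = Suc k'" "S \<subseteq> incident E ep x" "A x S"
        "(topple A ^^ k') (send_along n ep x S (\<lambda>j. q j + p j)) r" by blast
    have "card S \<le> q x" using card_le_deg[OF S(2)] x(2) by linarith
    then have "(topple A ^^ k') (\<lambda>j. send_along n ep x S q j + p j) r"
      using S(4) send_along_add[OF less.prems(4), of S q x] by simp
    then obtain q' where q': "stable n E ep q'" "(topple A)\<^sup>*\<^sup>* (send_along n ep x S q) q'"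
        "(chain_step (topple A) n E ep)\<^sup>*\<^sup>* q' r"
      using less.hyps[of k' p, OF _ _ less.prems(2) send_along_config less.prems(4)] S(1) by fastforce
    have "topple A q (send_along n ep x S q)" using x S(2,3) by (rule toppleI)
    then show ?thesis using q' by (meson converse_rtranclp_into_rtranclp)
  next
    case stable_q: True
    show ?thesis
    proof (cases "\<exists>i\<in>{1..n}. 0 < p i")
      case False
      then have "p = (\<lambda>_. 0)" using config_outside[OF less.prems(4)] by fastforce
      then have "(topple A ^^ k) q r" using less.prems(1) by simp
      then show ?thesis using stable_q topple_relpowp_stable by blast
    next
      case True
      then obtain i where i: "i \<in> {1..n}" "0 < p i" by blast
      define q1 where "q1 = q(i := Suc (q i))"
      define p1 where "p1 = p(i := p i - 1)"
      have "(\<lambda>j. q1 j + p1 j) = (\<lambda>j. q j + p j)"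
        unfolding q1_def p1_def using i by (auto simp: fun_eq_iff)
      moreover have "sum p1 {1..n} < sum p {1..n}"
        unfolding p1_def using i by (simp add: sum.remove)
      moreover have "is_config n q1" "is_config n p1"
        using less.prems(3,4) i unfolding q1_def p1_def is_config_def by auto
      ultimately obtain q' where q': "stable n E ep q'" "(topple A)\<^sup>*\<^sup>* q1 q'"
          "(chain_step (topple A) n E ep)\<^sup>*\<^sup>* q' r"
        using less.hyps[of k p1 q1] less.prems(1,2) by auto
      have "chain_step (topple A) n E ep q q'"
        unfolding chain_step_def q1_def using i q' q1_def by blast
      then show ?thesis using q' stable_q by (meson converse_rtranclp_into_rtranclp rtranclp.rtrancl_refl)
    qed
  qed
qed

lemma chain_if_topples_from_above:
  assumes "stable n E ep q" "q \<le> u" "is_config n u" "(topple A)\<^sup>*\<^sup>* u r" "stable n E ep r"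
  shows "(chain_step (topple A) n E ep)\<^sup>*\<^sup>* q r"
proof -
  have q: "is_config n q" using assms(1) unfolding stable_def by blast
  define p where "p j = u j - q j" for j
  have "u = (\<lambda>j. q j + p j)" using assms(2) unfolding p_def le_fun_def by (auto simp: fun_eq_iff)
  moreover have "is_config n p" using assms(3) unfolding p_def is_config_def by auto
  moreover obtain k where "(topple A ^^ k) u r" using assms(4) rtranclp_imp_relpowp by metis
  ultimately obtain q' where "stable n E ep q'" "(topple A)\<^sup>*\<^sup>* q q'" "(chain_step (topple A) n E ep)\<^sup>*\<^sup>* q' r"
    using stabilisation_chain assms(5) q by blast
  then show ?thesis using assms(1) stable_not_topple by (metis converse_rtranclpE)
qed

section \<open>Recurrence\<close>

definition max_stable :: "nat \<Rightarrow> nat" where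
  "max_stable j = (if j \<in> {1..n} then deg E ep j - 1 else 0)"

lemma stable_max_stable: "stable n E ep max_stable"
  using deg_pos unfolding stable_def is_config_def max_stable_def by fastforce

lemma stable_le_max_stable:
  assumes "stable n E ep c" shows "c \<le> max_stable"
proof (rule le_funI)
  fix j
  show "c j \<le> max_stable j"
    using assms config_outside[of n c j] unfolding stable_def max_stable_def by fastforce
qed

lemma chain_stable: "(chain_step T n E ep)\<^sup>*\<^sup>* c c' \<Longrightarrow> stable n E ep c \<Longrightarrow> stable n E ep c'"
  by (induction rule: rtranclp_induct) (auto simp: chain_step_def)

lemma chain_add_grains:
  "stable n E ep c \<Longrightarrow> stable n E ep s \<Longrightarrow> c \<le> s \<Longrightarrow> (chain_step T n E ep)\<^sup>*\<^sup>* c s"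
proof (induction "sum (\<lambda>j. s j - c j) {1..n}" arbitrary: c rule: less_induct)
  case less
  show ?case
  proof (cases "\<exists>i\<in>{1..n}. c i < s i")
    case False
    then have "c = s"
      using less.prems config_eqI unfolding stable_def le_fun_def by (meson antisym not_less)
    then show ?thesis by simp
  next
    case True
    then obtain i where i: "i \<in> {1..n}" "c i < s i" by blast
    define c1 where "c1 = c(i := Suc (c i))"
    have "s i < deg E ep i" using less.prems(2) i(1) unfolding stable_def by blast
    then have c1: "stable n E ep c1"
      using less.prems(1) i unfolding c1_def stable_def is_config_def by auto
    then have "chain_step T n E ep c c1"
      unfolding chain_step_def using i c1_def by auto
    moreover have "c1 \<le> s" using less.prems(3) i unfolding c1_def le_fun_def by simp
    moreover have "sum (\<lambda>j. s j - c1 j) {1..n} < sum (\<lambda>j. s j - c j) {1..n}"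
      using i by (simp add: c1_def sum.remove)
    ultimately show ?thesis using less.hyps c1 less.prems(2) by (meson converse_rtranclp_into_rtranclp)
  qed
qed

lemma recurrent_iff_reachable:
  "recurrent T n E ep c \<longleftrightarrow> stable n E ep c \<and> (chain_step T n E ep)\<^sup>*\<^sup>* max_stable c"
proof -
  have to_max: "(chain_step T n E ep)\<^sup>*\<^sup>* c' max_stable" if "stable n E ep c'" for c'
    using chain_add_grains[OF that stable_max_stable stable_le_max_stable[OF that]] .
  show ?thesis
  proof
    assume "recurrent T n E ep c"
    then show "stable n E ep c \<and> (chain_step T n E ep)\<^sup>*\<^sup>* max_stable c"
      unfolding recurrent_def using to_max by blast
  next
    assume c: "stable n E ep c \<and> (chain_step T n E ep)\<^sup>*\<^sup>* max_stable c"
    have "(chain_step T n E ep)\<^sup>*\<^sup>* c' c" if "(chain_step T n E ep)\<^sup>*\<^sup>* c c'" for c'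
      using to_max[OF chain_stable[OF that]] c by (meson rtranclp_trans)
    then show "recurrent T n E ep c" unfolding recurrent_def using c by blast
  qed
qed

section \<open>Orientations\<close>

definition tail :: "('e \<Rightarrow> nat) \<Rightarrow> 'e \<Rightarrow> nat" where
  "tail h e = other ep e (h e)"

context
  fixes h assumes h: "orientation E ep h"
begin

lemma head_incident: "e \<in> E \<Longrightarrow> e \<in> incident E ep (h e)"
  using h unfolding orientation_def incident_def by auto

lemma head_le: "e \<in> E \<Longrightarrow> h e \<le> n"
  using head_incident incident_le by blast

lemma head_cases: "e \<in> incident E ep i \<Longrightarrow> h e = i \<or> h e = other ep e i"
  using h incident_subset unfolding orientation_def incident_def other_def by auto

lemma tail_eqI: "e \<in> incident E ep i \<Longrightarrow> h e \<noteq> i \<Longrightarrow> tail h e = i"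
  using head_cases other_other unfolding tail_def by metis

lemma tail_incident: "e \<in> E \<Longrightarrow> e \<in> incident E ep (tail h e)"
  unfolding tail_def using head_incident incident_other by blast

lemma tail_ne_head: "e \<in> E \<Longrightarrow> tail h e \<noteq> h e"
  unfolding tail_def using head_incident other_ne by blast

lemma tail_le: "e \<in> E \<Longrightarrow> tail h e \<le> n"
  unfolding tail_def using head_incident other_le by blast

lemma other_tail: "e \<in> E \<Longrightarrow> other ep e (tail h e) = h e"
  unfolding tail_def using head_incident other_other by blast

lemma in_edges_subset: "{e \<in> E. h e = i} \<subseteq> incident E ep i"
  using head_incident by blast

lemma indeg_root: "is_root E ep h v \<Longrightarrow> indeg E h v = deg E ep v"
proof -
  assume "is_root E ep h v"
  then have "{e \<in> E. h e = v} = incident E ep v"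
    using in_edges_subset[of v] incident_subset unfolding is_root_def by auto
  then show ?thesis unfolding indeg_def deg_def by simp
qed

lemma indeg_less_deg: "\<not> is_root E ep h v \<Longrightarrow> indeg E h v < deg E ep v"
proof -
  assume "\<not> is_root E ep h v"
  then obtain e where "e \<in> incident E ep v" "h e \<noteq> v" unfolding is_root_def by blast
  then have "{e \<in> E. h e = v} \<subset> incident E ep v" using in_edges_subset by blast
  then show ?thesis unfolding indeg_def deg_def using finite_incident psubset_card_mono by blast
qed

lemma arc_of_edge: "e \<in> E \<Longrightarrow> (tail h e, h e) \<in> arcs E ep h"
  unfolding arcs_def tail_def by blast

lemma arcs_subset: "arcs E ep h \<subseteq> {0..n} \<times> {0..n}"
  using head_le tail_le unfolding arcs_def tail_def by auto

lemma finite_arcs: "finite (arcs E ep h)"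
  using arcs_subset finite_subset by blast

lemma sum_indeg:
  assumes "is_root E ep h 0"
  shows "(\<Sum>i\<in>{1..n}. indeg E h i) + deg E ep 0 = card E"
proof -
  have "(\<Union>v\<in>{0..n}. {e\<in>E. h e = v}) = E" using head_le by auto
  moreover have "card (\<Union>v\<in>{0..n}. {e\<in>E. h e = v}) = (\<Sum>v\<in>{0..n}. indeg E h v)"
    unfolding indeg_def by (rule card_UN_disjoint) (use finite_edges in auto)
  moreover have "(\<Sum>v\<in>{0..n}. indeg E h v) = indeg E h 0 + (\<Sum>v\<in>{1..n}. indeg E h v)"
    by (simp add: sum.atLeast_Suc_atMost)
  ultimately show ?thesis using indeg_root[OF assms] by simp
qed

end

section \<open>Recurrent states dominate sink-rooted orientations\<close>

definition rooted_orientation_below :: "(('e \<Rightarrow> nat) \<Rightarrow> bool) \<Rightarrow> (nat \<Rightarrow> nat) \<Rightarrow> bool" where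
  "rooted_orientation_below Q q \<longleftrightarrow>
     (\<exists>h. orientation E ep h \<and> is_root E ep h 0 \<and> Q h \<and> (\<forall>i\<in>{1..n}. indeg E h i \<le> q i))"

definition reorient :: "('e \<Rightarrow> nat) \<Rightarrow> nat \<Rightarrow> 'e set \<Rightarrow> 'e \<Rightarrow> nat" where
  "reorient h i S e = (if e \<in> S then other ep e i else h e)"

context
  fixes h i S
  assumes h: "orientation E ep h" and S: "S \<subseteq> incident E ep i"
begin

lemma orientation_reorient: "orientation E ep (reorient h i S)"
  using h S unfolding orientation_def reorient_def incident_def other_def by auto

lemma root_reorient: "is_root E ep h 0 \<Longrightarrow> i \<noteq> 0 \<Longrightarrow> is_root E ep (reorient h i S) 0"
  using S unfolding is_root_def reorient_def incident_def other_def by auto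

lemma indeg_reorient_self: "indeg E (reorient h i S) i \<le> deg E ep i - card S"
proof -
  have "{e \<in> E. reorient h i S e = i} \<subseteq> incident E ep i - S"
  proof
    fix e assume e: "e \<in> {e \<in> E. reorient h i S e = i}"
    then have "e \<notin> S" using S other_ne unfolding reorient_def by fastforce
    then show "e \<in> incident E ep i - S" using e head_incident[OF h] unfolding reorient_def by auto
  qed
  then have "indeg E (reorient h i S) i \<le> card (incident E ep i - S)"
    unfolding indeg_def using finite_incident by (simp add: card_mono)
  also have "\<dots> = deg E ep i - card S"
    unfolding deg_def using S finite_incident by (simp add: card_Diff_subset finite_subset)
  finally show ?thesis .
qed

lemma indeg_reorient_other:
  "j \<noteq> i \<Longrightarrow> indeg E (reorient h i S) j \<le> indeg E h j + card {e \<in> S. other ep e i = j}"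
proof -
  have "finite {e \<in> S. other ep e i = j}"
    using S finite_incident finite_subset by (metis (no_types, lifting) mem_Collect_eq subsetI)
  moreover have "{e \<in> E. reorient h i S e = j} \<subseteq> {e \<in> E. h e = j} \<union> {e \<in> S. other ep e i = j}"
    unfolding reorient_def by auto
  ultimately have "indeg E (reorient h i S) j \<le> card ({e \<in> E. h e = j} \<union> {e \<in> S. other ep e i = j})"
    unfolding indeg_def using finite_edges by (simp add: card_mono)
  also have "\<dots> \<le> indeg E h j + card {e \<in> S. other ep e i = j}"
    unfolding indeg_def by (rule card_Un_le)
  finally show "indeg E (reorient h i S) j \<le> indeg E h j + card {e \<in> S. other ep e i = j}" .
qed

lemma indeg_reorient_le_send_along:
  assumes "i \<in> {1..n}" "\<forall>j\<in>{1..n}. indeg E h j \<le> q j" "deg E ep i \<le> q i"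
  shows "\<forall>j\<in>{1..n}. indeg E (reorient h i S) j \<le> send_along n ep i S q j"
proof
  fix j assume j: "j \<in> {1..n}"
  show "indeg E (reorient h i S) j \<le> send_along n ep i S q j"
  proof (cases "j = i")
    case True
    then have "send_along n ep i S q j = q i - card S"
      using send_along_self assms(1) S by simp
    then show ?thesis using True indeg_reorient_self assms(3) by simp
  next
    case False
    then show ?thesis
      using send_along_other[OF j False, of ep S q] indeg_reorient_other[OF False] assms(2) j by fastforce
  qed
qed

end

text \<open>Firing all edges of \<open>i\<close> makes \<open>i\<close> a source, which lies on no cycle.\<close>
lemma acyclic_reorient_all:
  assumes h: "orientation E ep h" and acyc: "acyclic (arcs E ep h)"
  shows "acyclic (arcs E ep (reorient h i (incident E ep i)))"
proof -
  let ?B = "arcs E ep (reorient h i (incident E ep i))"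
  have source: "(x, i) \<notin> ?B" for x
  proof
    assume "(x, i) \<in> ?B"
    then obtain e where "e \<in> E" "reorient h i (incident E ep i) e = i" unfolding arcs_def by auto
    then show False using other_ne head_incident[OF h] unfolding reorient_def by (metis (full_types))
  qed
  have B_sub: "?B \<subseteq> arcs E ep h \<union> ({i} \<times> UNIV)"
  proof
    fix p assume "p \<in> ?B"
    then obtain e where e: "e \<in> E" "p = (tail (reorient h i (incident E ep i)) e, reorient h i (incident E ep i) e)"
      unfolding arcs_def tail_def by blast
    show "p \<in> arcs E ep h \<union> ({i} \<times> UNIV)"
    proof (cases "e \<in> incident E ep i")
      case True
      then show ?thesis using e other_other unfolding tail_def reorient_def by simp
    next
      case False
      then show ?thesis using e arc_of_edge[OF h] unfolding tail_def reorient_def by simp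
    qed
  qed
  have "(x, y) \<in> ?B\<^sup>+ \<Longrightarrow> (x, y) \<in> (arcs E ep h)\<^sup>+ \<or> x = i" for x y
  proof (induction rule: trancl_induct)
    case (base y)
    then show ?case using B_sub by auto
  next
    case (step y z)
    have "y \<noteq> i" using step(1) source by (metis tranclD2)
    then have "(y, z) \<in> arcs E ep h" using step(2) B_sub by auto
    then show ?case using step(3) by (meson trancl.trancl_into_trancl)
  qed
  moreover have "(i, i) \<notin> ?B\<^sup>+" using source by (metis tranclD2)
  ultimately show ?thesis using acyc unfolding acyclic_def by blast
qed

lemma rooted_orientation_below_mono:
  "rooted_orientation_below Q q \<Longrightarrow> (\<forall>i\<in>{1..n}. q i \<le> q' i) \<Longrightarrow> rooted_orientation_below Q q'"
  unfolding rooted_orientation_below_def by (meson order_trans)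

context
  fixes A Q
  assumes Q_reorient: "\<And>h i S. orientation E ep h \<Longrightarrow> Q h \<Longrightarrow> i \<in> {1..n} \<Longrightarrow> S \<subseteq> incident E ep i
    \<Longrightarrow> A i S \<Longrightarrow> Q (reorient h i S)"
begin

lemma topple_rooted_orientation_below:
  assumes "topple A q q'" "rooted_orientation_below Q q"
  shows "rooted_orientation_below Q q'"
proof -
  from assms(1) obtain i S where i: "i \<in> {1..n}" "deg E ep i \<le> q i" "S \<subseteq> incident E ep i" "A i S"
      and q': "q' = send_along n ep i S q"
    unfolding topple_def by blast
  from assms(2) obtain h where h: "orientation E ep h" "is_root E ep h 0" "Q h"
      "\<forall>i\<in>{1..n}. indeg E h i \<le> q i"
    unfolding rooted_orientation_below_def by blast
  have "i \<noteq> 0" using i(1) by simp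
  then show ?thesis
    unfolding rooted_orientation_below_def q'
    using orientation_reorient[OF h(1) i(3)] root_reorient[OF h(1) i(3) h(2)]
      indeg_reorient_le_send_along[OF h(1) i(3) i(1) h(4) i(2)] Q_reorient[OF h(1) h(3) i(1,3,4)]
    by blast
qed

lemma chain_rooted_orientation_below:
  "(chain_step (topple A) n E ep)\<^sup>*\<^sup>* q q' \<Longrightarrow> rooted_orientation_below Q q \<Longrightarrow> rooted_orientation_below Q q'"
proof (induction rule: rtranclp_induct)
  case (step y z)
  then obtain i where i: "(topple A)\<^sup>*\<^sup>* (y(i := Suc (y i))) z" unfolding chain_step_def by blast
  have "rooted_orientation_below Q (y(i := Suc (y i)))"
    using rooted_orientation_below_mono step.IH step.prems by simp
  with i show ?case
    by (induction rule: rtranclp_induct) (auto intro: topple_rooted_orientation_below)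
qed

end

definition bfs_key :: "nat \<Rightarrow> nat" where
  "bfs_key v = dist v * (n + 1) + v"

definition bfs_orientation :: "'e \<Rightarrow> nat" where
  "bfs_orientation e =
     (if bfs_key (fst (ep e)) < bfs_key (snd (ep e)) then fst (ep e) else snd (ep e))"

lemma bfs_key_inj: "a \<le> n \<Longrightarrow> b \<le> n \<Longrightarrow> bfs_key a = bfs_key b \<Longrightarrow> a = b"
  unfolding bfs_key_def by (metis add.commute le_imp_less_Suc mod_less mod_mult_self1 Suc_eq_plus1)

lemma bfs_key_less: "dist a < dist b \<Longrightarrow> a \<le> n \<Longrightarrow> bfs_key a < bfs_key b"
proof -
  assume "dist a < dist b" "a \<le> n"
  then have "bfs_key a < Suc (dist a) * (n + 1)" "Suc (dist a) * (n + 1) \<le> dist b * (n + 1)"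
    unfolding bfs_key_def by (simp, metis Suc_leI mult_le_mono1)
  then show ?thesis unfolding bfs_key_def by linarith
qed

lemma orientation_bfs: "orientation E ep bfs_orientation"
  unfolding orientation_def bfs_orientation_def by auto

lemma root_bfs: "is_root E ep bfs_orientation 0"
  unfolding is_root_def
proof
  fix e assume e: "e \<in> incident E ep 0"
  have "bfs_key 0 = 0" "0 < bfs_key (other ep e 0)"
    using dist_zero other_ne[OF e] unfolding bfs_key_def by simp_all
  then show "bfs_orientation e = 0" using e unfolding bfs_orientation_def incident_def other_def by auto
qed

lemma not_root_bfs: "i \<in> {1..n} \<Longrightarrow> \<not> is_root E ep bfs_orientation i"
proof
  assume i: "i \<in> {1..n}" and root: "is_root E ep bfs_orientation i"
  obtain e where e: "e \<in> incident E ep i" "dist (other ep e i) < dist i" using parent_edge[OF i] by blast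
  have "bfs_key (other ep e i) < bfs_key i" using bfs_key_less[OF e(2) other_le[OF e(1)]] .
  then have "bfs_orientation e = other ep e i"
    using e(1) unfolding bfs_orientation_def incident_def other_def by auto
  then show False using root e(1) other_ne[OF e(1)] unfolding is_root_def by auto
qed

lemma acyclic_bfs: "acyclic (arcs E ep bfs_orientation)"
proof -
  have "arcs E ep bfs_orientation \<subseteq> (inv_image less_than bfs_key)\<inverse>"
  proof
    fix p assume "p \<in> arcs E ep bfs_orientation"
    then obtain e where e: "e \<in> E" "p = (other ep e (bfs_orientation e), bfs_orientation e)"
      unfolding arcs_def by blast
    have "bfs_key (fst (ep e)) \<noteq> bfs_key (snd (ep e))" using bfs_key_inj edge_endpoints[OF e(1)] by blast
    then have "bfs_key (bfs_orientation e) < bfs_key (other ep e (bfs_orientation e))"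
      unfolding bfs_orientation_def other_def using edge_endpoints[OF e(1)] by auto
    then show "p \<in> (inv_image less_than bfs_key)\<inverse>" using e(2) by simp
  qed
  moreover have "acyclic ((inv_image less_than bfs_key)\<inverse>)"
    unfolding acyclic_converse by (rule wf_acyclic) simp
  ultimately show ?thesis using acyclic_subset by blast
qed

lemma max_stable_rooted_orientation_below:
  "rooted_orientation_below (\<lambda>h. acyclic (arcs E ep h)) max_stable"
  unfolding rooted_orientation_below_def
  using orientation_bfs root_bfs acyclic_bfs indeg_less_deg[OF orientation_bfs] not_root_bfs
  unfolding max_stable_def by fastforce

lemma sink_rooted_if_stable_below:
  assumes "rooted_orientation_below Q q" "stable n E ep q"
  shows "\<exists>h. sink_rooted n E ep h \<and> Q h \<and> (\<forall>i\<in>{1..n}. indeg E h i \<le> q i)"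
proof -
  from assms(1) obtain h where h: "orientation E ep h" "is_root E ep h 0" "Q h"
      "\<forall>i\<in>{1..n}. indeg E h i \<le> q i"
    unfolding rooted_orientation_below_def by blast
  have "\<not> is_root E ep h v" if "v \<in> {1..n}" for v
    using indeg_root[OF h(1)] h(4) assms(2) that unfolding stable_def by fastforce
  then show ?thesis unfolding sink_rooted_def using h by blast
qed

lemma sink_rooted_below_if_SR:
  assumes "SR n E ep c"
  shows "\<exists>h. sink_rooted n E ep h \<and> (\<forall>i\<in>{1..n}. indeg E h i \<le> c i)"
proof -
  have c: "stable n E ep c" "(chain_step (topple (\<lambda>_ _. True)) n E ep)\<^sup>*\<^sup>* max_stable c"
    using assms unfolding SR_def ssm_topple_eq recurrent_iff_reachable by auto
  have "rooted_orientation_below (\<lambda>_. True) max_stable"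
    using max_stable_rooted_orientation_below unfolding rooted_orientation_below_def by blast
  then have "rooted_orientation_below (\<lambda>_. True) c"
    using chain_rooted_orientation_below[of "\<lambda>_. True" "\<lambda>_ _. True"] c(2) by simp
  then show ?thesis using sink_rooted_if_stable_below c(1) by blast
qed

lemma acyclic_sink_rooted_below_if_DR:
  assumes "DR n E ep c"
  shows "\<exists>h. sink_rooted n E ep h \<and> acyclic_orientation E ep h \<and> (\<forall>i\<in>{1..n}. indeg E h i \<le> c i)"
proof -
  have c: "stable n E ep c" "(chain_step (topple (\<lambda>i S. S = incident E ep i)) n E ep)\<^sup>*\<^sup>* max_stable c"
    using assms unfolding DR_def asm_topple_eq recurrent_iff_reachable by auto
  have "rooted_orientation_below (\<lambda>h. acyclic (arcs E ep h)) c"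
    by (rule chain_rooted_orientation_below[OF _ c(2) max_stable_rooted_orientation_below])
      (use acyclic_reorient_all in blast)
  then show ?thesis using sink_rooted_if_stable_below c(1) unfolding acyclic_orientation_def by blast
qed

section \<open>Stochastically recurrent in-degree vectors\<close>

definition indeg_config :: "('e \<Rightarrow> nat) \<Rightarrow> nat \<Rightarrow> nat" where
  "indeg_config h j = (if j \<in> {1..n} then indeg E h j else 0)"

lemma stable_indeg_config: "sink_rooted n E ep h \<Longrightarrow> stable n E ep (indeg_config h)"
  using indeg_less_deg unfolding sink_rooted_def stable_def is_config_def indeg_config_def by auto

lemma indeg_config_le: "\<forall>i\<in>{1..n}. indeg E h i \<le> c i \<Longrightarrow> indeg_config h \<le> c"
  unfolding indeg_config_def le_fun_def by simp

text \<open>Single-edge stochastic topplings let an unstable vertex pass all its excess grains to one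
  neighbour.\<close>
lemma ssm_topple_excess:
  assumes y: "y \<in> {1..n}" and e0: "e0 \<in> incident E ep y"
  shows "is_config n q \<Longrightarrow> q y = deg E ep y + m \<Longrightarrow>
    \<exists>q'. (topple (\<lambda>_ _. True))\<^sup>*\<^sup>* q q' \<and> is_config n q' \<and> q' y = deg E ep y \<and>
      (\<forall>j. j \<noteq> y \<longrightarrow> j \<noteq> other ep e0 y \<longrightarrow> q' j = q j) \<and> q (other ep e0 y) \<le> q' (other ep e0 y)"
proof (induction m arbitrary: q)
  case 0
  then show ?case by auto
next
  case (Suc m)
  let ?p = "other ep e0 y"
  define q1 where "q1 = send_along n ep y {e0} q"
  have p: "?p \<noteq> y" using other_ne[OF e0] .
  have step: "topple (\<lambda>_ _. True) q q1"
    unfolding q1_def using y e0 Suc.prems(2) by (intro toppleI) auto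
  have "q1 y = deg E ep y + m"
    unfolding q1_def using send_along_self[OF y] e0 Suc.prems(2) by simp
  then obtain q' where q': "(topple (\<lambda>_ _. True))\<^sup>*\<^sup>* q1 q'" "is_config n q'" "q' y = deg E ep y"
      "\<forall>j. j \<noteq> y \<longrightarrow> j \<noteq> ?p \<longrightarrow> q' j = q1 j" "q1 ?p \<le> q' ?p"
    using Suc.IH[of q1] send_along_config unfolding q1_def by blast
  have "q1 j = q j" if "j \<noteq> y" "j \<noteq> ?p" for j
    using that Suc.prems(1) unfolding q1_def send_along_def is_config_def by auto
  then have "\<forall>j. j \<noteq> y \<longrightarrow> j \<noteq> ?p \<longrightarrow> q' j = q j" using q'(4) by simp
  moreover have "q ?p \<le> q1 ?p"
    unfolding q1_def using send_along_ge[OF p] Suc.prems(1) config_outside[of n q ?p] by fastforce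
  then have "q ?p \<le> q' ?p" using q'(5) by linarith
  ultimately show ?case
    using q'(2,3) converse_rtranclp_into_rtranclp[OF step q'(1)] by blast
qed

context
  fixes h assumes h: "orientation E ep h"
begin

lemma send_along_keep_in_edges_self:
  assumes y: "y \<in> {1..n}" and q: "q y = deg E ep y"
  shows "send_along n ep y (incident E ep y - {e \<in> E. h e = y \<and> tail h e \<notin> R}) q y
       = card {e \<in> E. h e = y \<and> tail h e \<notin> R}"
proof -
  define K where "K = {e \<in> E. h e = y \<and> tail h e \<notin> R}"
  define S where "S = incident E ep y - K"
  have K: "K \<subseteq> incident E ep y" unfolding K_def using in_edges_subset[OF h] by blast
  then have "card S = deg E ep y - card K"
    unfolding S_def deg_def using finite_incident by (simp add: card_Diff_subset finite_subset)
  moreover have "card K \<le> deg E ep y" using card_le_deg[OF K] .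
  moreover have "send_along n ep y S q y = q y - card S"
    using send_along_self[OF y] unfolding S_def by blast
  ultimately show ?thesis unfolding S_def K_def using q by simp
qed

lemma send_along_keep_in_edges_other:
  assumes z: "z \<in> {1..n}" "z \<noteq> y" "z \<notin> R"
  shows "send_along n ep y (incident E ep y - {e \<in> E. h e = y \<and> tail h e \<notin> R}) q z
       = q z + card {e \<in> E. h e = z \<and> tail h e = y}"
proof -
  define S where "S = incident E ep y - {e \<in> E. h e = y \<and> tail h e \<notin> R}"
  have "{e \<in> S. other ep e y = z} = {e \<in> E. h e = z \<and> tail h e = y}"
  proof
    show "{e \<in> S. other ep e y = z} \<subseteq> {e \<in> E. h e = z \<and> tail h e = y}"
    proof
      fix e assume e: "e \<in> {e \<in> S. other ep e y = z}"
      then have inc: "e \<in> incident E ep y" and oth: "other ep e y = z" unfolding S_def by auto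
      have "h e \<noteq> y"
      proof
        assume "h e = y"
        then have "tail h e = z" using oth unfolding tail_def by simp
        then show False using e \<open>h e = y\<close> z(3) incident_subset unfolding S_def by auto
      qed
      then show "e \<in> {e \<in> E. h e = z \<and> tail h e = y}"
        using head_cases[OF h inc] tail_eqI[OF h inc] oth inc incident_subset by auto
    qed
  next
    show "{e \<in> E. h e = z \<and> tail h e = y} \<subseteq> {e \<in> S. other ep e y = z}"
      unfolding S_def using tail_incident[OF h] other_tail[OF h] z(2) by fastforce
  qed
  moreover have "send_along n ep y S q z = q z + card {e \<in> S. other ep e y = z}"
    using send_along_other[OF z(1,2)] .
  ultimately show ?thesis unfolding S_def by simp
qed

lemma card_in_edges_tail_remove:
  assumes "y \<in> R"
  shows "card {e \<in> E. h e = z \<and> tail h e \<notin> R - {y}}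
       = card {e \<in> E. h e = z \<and> tail h e \<notin> R} + card {e \<in> E. h e = z \<and> tail h e = y}"
proof -
  have "{e \<in> E. h e = z \<and> tail h e \<notin> R - {y}}
      = {e \<in> E. h e = z \<and> tail h e \<notin> R} \<union> {e \<in> E. h e = z \<and> tail h e = y}"
    using assms by auto
  moreover have "{e \<in> E. h e = z \<and> tail h e \<notin> R} \<inter> {e \<in> E. h e = z \<and> tail h e = y} = {}"
    using assms by auto
  ultimately show ?thesis using finite_edges by (simp add: card_Un_disjoint)
qed

lemma send_along_keep_in_edges:
  assumes y: "y \<in> R" "y \<in> {1..n}" and q: "q y = deg E ep y"
    and processed: "\<forall>z\<in>{1..n} - R. q z = card {e \<in> E. h e = z \<and> tail h e \<notin> R}"
  shows "\<forall>z\<in>{1..n} - (R - {y}).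
    send_along n ep y (incident E ep y - {e \<in> E. h e = y \<and> tail h e \<notin> R}) q z
      = card {e \<in> E. h e = z \<and> tail h e \<notin> R - {y}}"
proof
  fix z assume z: "z \<in> {1..n} - (R - {y})"
  show "send_along n ep y (incident E ep y - {e \<in> E. h e = y \<and> tail h e \<notin> R}) q z
      = card {e \<in> E. h e = z \<and> tail h e \<notin> R - {y}}"
  proof (cases "z = y")
    case True
    have "{e \<in> E. h e = y \<and> tail h e \<notin> R - {y}} = {e \<in> E. h e = y \<and> tail h e \<notin> R}"
      using tail_ne_head[OF h] by auto
    then show ?thesis using send_along_keep_in_edges_self[of y q R, OF y(2) q] True by simp
  next
    case False
    then show ?thesis
      using send_along_keep_in_edges_other[of z y R q] card_in_edges_tail_remove[OF y(1)] processed z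
      by auto
  qed
qed

text \<open>The vertices of \<open>R\<close> are still to be processed, in order of decreasing distance to the
  sink. A processed vertex \<open>z\<close> holds one grain per in-edge whose tail is processed; processing
  \<open>y\<close> first passes its excess to a vertex nearer the sink, then fires all edges except the in-edges
  from processed tails.\<close>
lemma ssm_process_step:
  assumes R: "R \<subseteq> {1..n}" "\<forall>y\<in>R. \<forall>x\<in>{1..n} - R. dist y \<le> dist x"
    and q: "is_config n q" "\<forall>y\<in>R. deg E ep y \<le> q y"
      "\<forall>z\<in>{1..n} - R. q z = card {e \<in> E. h e = z \<and> tail h e \<notin> R}"
    and y: "y \<in> R"
  obtains q'' where "(topple (\<lambda>_ _. True))\<^sup>*\<^sup>* q q''" "is_config n q''"
    "\<forall>z\<in>R - {y}. deg E ep z \<le> q'' z"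
    "\<forall>z\<in>{1..n} - (R - {y}). q'' z = card {e \<in> E. h e = z \<and> tail h e \<notin> R - {y}}"
proof -
  have y_n: "y \<in> {1..n}" using y R(1) by blast
  obtain e0 where e0: "e0 \<in> incident E ep y" "dist (other ep e0 y) < dist y"
    using parent_edge[OF y_n] by blast
  let ?p = "other ep e0 y"
  have p: "?p \<notin> {1..n} - R" using R(2) y e0(2) by (meson not_less)
  obtain q' where q': "(topple (\<lambda>_ _. True))\<^sup>*\<^sup>* q q'" "q' y = deg E ep y"
      "\<forall>j. j \<noteq> y \<longrightarrow> j \<noteq> ?p \<longrightarrow> q' j = q j" "q ?p \<le> q' ?p"
    using ssm_topple_excess[OF y_n e0(1) q(1), of "q y - deg E ep y"] q(2) y by auto
  define S where "S = incident E ep y - {e \<in> E. h e = y \<and> tail h e \<notin> R}"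
  define q'' where "q'' = send_along n ep y S q'"
  have "topple (\<lambda>_ _. True) q' q''" unfolding q''_def S_def using y_n q'(2) by (intro toppleI) auto
  then have "(topple (\<lambda>_ _. True))\<^sup>*\<^sup>* q q''" using q'(1) by simp
  moreover have "deg E ep z \<le> q'' z" if z: "z \<in> R - {y}" for z
  proof -
    have "q z \<le> q' z" using q'(3,4) z by (cases "z = ?p") auto
    also have "\<dots> \<le> q'' z" unfolding q''_def using send_along_ge z R(1) by blast
    finally show ?thesis using q(2) z by fastforce
  qed
  moreover have "q' z = q z" if "z \<in> {1..n} - R" for z
    using q'(3) that p y by (metis DiffD2)
  then have "\<forall>z\<in>{1..n} - R. q' z = card {e \<in> E. h e = z \<and> tail h e \<notin> R}"
    using q(3) by simp
  then have "\<forall>z\<in>{1..n} - (R - {y}). q'' z = card {e \<in> E. h e = z \<and> tail h e \<notin> R - {y}}"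
    using send_along_keep_in_edges[of y R q', OF y y_n q'(2)] unfolding q''_def S_def by blast
  ultimately show thesis using that send_along_config unfolding q''_def by blast
qed

lemma ssm_topples_to_indeg_config:
  "R \<subseteq> {1..n} \<Longrightarrow> (\<forall>y\<in>R. \<forall>x\<in>{1..n} - R. dist y \<le> dist x) \<Longrightarrow> is_config n q \<Longrightarrow>
   (\<forall>y\<in>R. deg E ep y \<le> q y) \<Longrightarrow> (\<forall>z\<in>{1..n} - R. q z = card {e \<in> E. h e = z \<and> tail h e \<notin> R}) \<Longrightarrow>
   (topple (\<lambda>_ _. True))\<^sup>*\<^sup>* q (indeg_config h)"
proof (induction "card R" arbitrary: R q rule: less_induct)
  case less
  have finR: "finite R" using less.prems(1) finite_subset by blast
  show ?case
  proof (cases "R = {}")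
    case True
    have "q = indeg_config h"
      using less.prems(3,5) True by (intro config_eqI) (auto simp: indeg_config_def indeg_def is_config_def)
    then show ?thesis by simp
  next
    case False
    have "Max (dist ` R) \<in> dist ` R" using finR False by simp
    then obtain y where y: "y \<in> R" and "dist y = Max (dist ` R)" by (metis imageE)
    then have y_far: "\<forall>y'\<in>R. dist y' \<le> dist y" using finR by simp
    obtain q'' where q'': "(topple (\<lambda>_ _. True))\<^sup>*\<^sup>* q q''" "is_config n q''"
        "\<forall>z\<in>R - {y}. deg E ep z \<le> q'' z"
        "\<forall>z\<in>{1..n} - (R - {y}). q'' z = card {e \<in> E. h e = z \<and> tail h e \<notin> R - {y}}"
      using ssm_process_step[OF less.prems y] .
    have "\<forall>y'\<in>R - {y}. \<forall>x\<in>{1..n} - (R - {y}). dist y' \<le> dist x"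
      using less.prems(2) y_far by (metis DiffD1 DiffD2 DiffI singletonD)
    moreover have "card (R - {y}) < card R" using card_Diff1_less[OF finR y] .
    ultimately have "(topple (\<lambda>_ _. True))\<^sup>*\<^sup>* q'' (indeg_config h)"
      using less.hyps[of "R - {y}" q''] less.prems(1) q''(2-4) by blast
    then show ?thesis using q''(1) by simp
  qed
qed

end

lemma recurrent_if_topples_to_indeg_config:
  assumes h: "sink_rooted n E ep h" and u: "max_stable \<le> u" "is_config n u"
    and topples: "(topple A)\<^sup>*\<^sup>* u (indeg_config h)"
    and c: "stable n E ep c" "\<forall>i\<in>{1..n}. indeg E h i \<le> c i"
  shows "recurrent (topple A) n E ep c"
proof -
  have "(chain_step (topple A) n E ep)\<^sup>*\<^sup>* max_stable (indeg_config h)"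
    using chain_if_topples_from_above[OF stable_max_stable u topples stable_indeg_config[OF h]] .
  moreover have "(chain_step (topple A) n E ep)\<^sup>*\<^sup>* (indeg_config h) c"
    using chain_add_grains[OF stable_indeg_config[OF h] c(1) indeg_config_le[OF c(2)]] .
  ultimately show ?thesis using c(1) recurrent_iff_reachable by (metis rtranclp_trans)
qed

lemma SR_iff_sink_rooted_below:
  "SR n E ep c \<longleftrightarrow> stable n E ep c \<and> (\<exists>h. sink_rooted n E ep h \<and> (\<forall>i\<in>{1..n}. indeg E h i \<le> c i))"
proof
  assume "SR n E ep c"
  then show "stable n E ep c \<and> (\<exists>h. sink_rooted n E ep h \<and> (\<forall>i\<in>{1..n}. indeg E h i \<le> c i))"
    using sink_rooted_below_if_SR unfolding SR_def recurrent_def by blast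
next
  assume "stable n E ep c \<and> (\<exists>h. sink_rooted n E ep h \<and> (\<forall>i\<in>{1..n}. indeg E h i \<le> c i))"
  then obtain h where c: "stable n E ep c" and h: "sink_rooted n E ep h" "\<forall>i\<in>{1..n}. indeg E h i \<le> c i"
    by blast
  define u where "u j = (if j \<in> {1..n} then deg E ep j else 0)" for j
  have u: "max_stable \<le> u" "is_config n u"
    unfolding u_def max_stable_def le_fun_def is_config_def by auto
  have "(topple (\<lambda>_ _. True))\<^sup>*\<^sup>* u (indeg_config h)"
    using h(1) u(2) unfolding sink_rooted_def by (intro ssm_topples_to_indeg_config[of h "{1..n}"]) (auto simp: u_def)
  then show "SR n E ep c"
    unfolding SR_def ssm_topple_eq using recurrent_if_topples_to_indeg_config[OF h(1) u _ c h(2)] by blast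
qed

section \<open>Deterministically recurrent in-degree vectors\<close>

definition laplacian :: "(nat \<Rightarrow> nat) \<Rightarrow> nat \<Rightarrow> int" where
  "laplacian r x = (\<Sum>e\<in>incident E ep x. int (r x) - int (r (other ep e x)))"

text \<open>Toppling \<open>x\<close> once changes the configuration by minus the \<open>x\<close>-th column of the reduced
  Laplacian.\<close>
lemma laplacian_decrement:
  assumes "1 \<le> r x"
  shows "laplacian (r(x := r x - 1)) j = laplacian r j - (if j = x then int (deg E ep j) else 0)
           + int (card {e \<in> incident E ep j. other ep e j = x})"
proof -
  let ?r' = "r(x := r x - 1)"
  have "int (?r' j) - int (?r' (other ep e j)) =
      (int (r j) - int (r (other ep e j))) - (if j = x then 1 else 0) + (if other ep e j = x then 1 else 0)"
    if e: "e \<in> incident E ep j" for e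
    using other_ne[OF e] assms by (cases "j = x"; cases "other ep e j = x") (simp_all add: of_nat_diff)
  then have "laplacian ?r' j = (\<Sum>e\<in>incident E ep j. ((int (r j) - int (r (other ep e j)))
      - (if j = x then 1 else 0)) + (if other ep e j = x then 1 else 0))"
    unfolding laplacian_def by (intro sum.cong) auto
  also have "\<dots> = laplacian r j - (\<Sum>e\<in>incident E ep j. if j = x then 1 else 0)
      + (\<Sum>e\<in>incident E ep j. if other ep e j = x then 1 else 0)"
    unfolding laplacian_def by (simp add: sum.distrib sum_subtractf)
  finally show ?thesis
    unfolding deg_def by (simp add: sum_indicator_card[OF finite_incident])
qed

lemma deg_eq_indeg_add_out_edges:
  assumes "orientation E ep h"
  shows "deg E ep x = indeg E h x + card {e \<in> incident E ep x. h e \<noteq> x}"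
proof -
  have "{e \<in> incident E ep x. h e = x} = {e \<in> E. h e = x}"
    using in_edges_subset[OF assms, of x] incident_subset by blast
  moreover have "incident E ep x = {e \<in> incident E ep x. h e = x} \<union> {e \<in> incident E ep x. h e \<noteq> x}"
    by blast
  ultimately show ?thesis
    unfolding deg_def indeg_def using finite_incident
    by (metis (no_types, lifting) card_Un_disjoint disjoint_iff finite_Un mem_Collect_eq)
qed

text \<open>A vertex of maximal toppling count that is minimal for the acyclic orientation among such
  vertices can topple: all its out-neighbours have strictly smaller counts.\<close>
lemma fireable_vertex:
  assumes h: "orientation E ep h" "acyclic (arcs E ep h)"
    and r: "(r :: nat \<Rightarrow> nat) 0 = 0" "x0 \<in> {1..n}" "r x0 \<noteq> 0"
  obtains x where "x \<in> {1..n}" "\<forall>v\<le>n. r v \<le> r x" "\<forall>e\<in>E. tail h e = x \<longrightarrow> r (h e) < r x"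
proof -
  define M where "M = Max (r ` {0..n})"
  have le_M: "r v \<le> M" if "v \<le> n" for v unfolding M_def using that by simp
  have "M \<in> r ` {0..n}" unfolding M_def by (intro Max_in) auto
  then obtain x1 where x1: "x1 \<in> {v \<in> {0..n}. r v = M}" by auto
  have "wf ((arcs E ep h)\<inverse>)"
    using finite_acyclic_wf_converse[OF finite_arcs[OF h(1)] h(2)] .
  then obtain x where x: "x \<in> {v \<in> {0..n}. r v = M}"
      and x_min: "\<forall>y. (x, y) \<in> arcs E ep h \<longrightarrow> y \<notin> {v \<in> {0..n}. r v = M}"
    using x1 unfolding wf_eq_minimal by (metis converse_iff)
  have "0 < M" using le_M[of x0] r(2,3) by simp
  then have "x \<noteq> 0" using x r(1) by (metis (mono_tags) mem_Collect_eq less_irrefl)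
  then have "x \<in> {1..n}" using x by simp
  moreover have "r (h e) < r x" if "e \<in> E" "tail h e = x" for e
    using x_min arc_of_edge[OF h(1) that(1)] that(2) le_M[OF head_le[OF h(1) that(1)]]
      head_le[OF h(1) that(1)] x by fastforce
  ultimately show thesis using that le_M x by auto
qed

lemma laplacian_ge_out_edges:
  assumes h: "orientation E ep h"
    and max: "\<forall>v\<le>n. r v \<le> r x" and out: "\<forall>e\<in>E. tail h e = x \<longrightarrow> r (h e) < r x"
  shows "int (card {e \<in> incident E ep x. h e \<noteq> x}) \<le> laplacian r x"
proof -
  have "(if h e \<noteq> x then 1 else 0) \<le> int (r x) - int (r (other ep e x))"
    if e: "e \<in> incident E ep x" for e
  proof (cases "h e = x")
    case True
    then show ?thesis using max other_le[OF e] by simp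
  next
    case False
    then show ?thesis
      using out tail_eqI[OF h e] head_cases[OF h e] incident_subset e by fastforce
  qed
  then have "(\<Sum>e\<in>incident E ep x. if h e \<noteq> x then 1 else 0) \<le> laplacian r x"
    unfolding laplacian_def by (intro sum_mono) blast
  then show ?thesis using sum_indicator_card[OF finite_incident] by metis
qed

lemma topple_laplacian_decrement:
  assumes x: "x \<in> {1..n}" "1 \<le> r x" "deg E ep x \<le> q x"
    and q: "\<forall>j\<in>{1..n}. int (q j) = int (s j) + laplacian r j"
  shows "\<forall>j\<in>{1..n}. int (send_along n ep x (incident E ep x) q j) = int (s j) + laplacian (r(x := r x - 1)) j"
proof
  fix j assume j: "j \<in> {1..n}"
  show "int (send_along n ep x (incident E ep x) q j) = int (s j) + laplacian (r(x := r x - 1)) j"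
  proof (cases "j = x")
    case True
    then show ?thesis
      using send_along_self[OF x(1)] laplacian_decrement[of r x x, OF x(2)]
        other_self_empty[of "incident E ep x" x] q j x(3) unfolding deg_def by (simp add: of_nat_diff)
  next
    case False
    then show ?thesis
      using send_along_other[OF j False, of ep "incident E ep x" q] laplacian_decrement[of r x j, OF x(2)]
        edges_between_sym[OF False] q j by simp
  qed
qed

text \<open>Each \<open>x\<close> topples \<open>r x\<close> times, always at a vertex provided by \<open>fireable_vertex\<close>.\<close>
lemma asm_topples_by_laplacian:
  assumes h: "orientation E ep h" "acyclic (arcs E ep h)"
    and s: "is_config n s" "\<forall>i\<in>{1..n}. indeg E h i \<le> s i"
  shows "is_config n q \<Longrightarrow> r 0 = 0 \<Longrightarrow> \<forall>x\<in>{1..n}. int (q x) = int (s x) + laplacian r x \<Longrightarrow>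
    (topple (\<lambda>i S. S = incident E ep i))\<^sup>*\<^sup>* q s"
proof (induction "sum r {1..n}" arbitrary: r q rule: less_induct)
  case less
  show ?case
  proof (cases "\<forall>x\<in>{1..n}. r x = 0")
    case True
    then have "r v = 0" if "v \<le> n" for v using less.prems(2) that by (cases "v = 0") auto
    then have "laplacian r x = 0" if "x \<in> {1..n}" for x
      unfolding laplacian_def using other_le incident_le by (intro sum.neutral) auto
    then have "q = s" using less.prems(1,3) s(1) by (intro config_eqI) auto
    then show ?thesis by simp
  next
    case False
    then obtain x where x: "x \<in> {1..n}" "\<forall>v\<le>n. r v \<le> r x" "\<forall>e\<in>E. tail h e = x \<longrightarrow> r (h e) < r x"
      using fireable_vertex[of h r, OF h less.prems(2)] by blast
    have rx: "1 \<le> r x" using False x(1,2) by fastforce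
    have "deg E ep x \<le> q x"
      using deg_eq_indeg_add_out_edges[OF h(1), of x] laplacian_ge_out_edges[OF h(1) x(2,3)]
        less.prems(3) s(2) x(1) by fastforce
    then have step: "topple (\<lambda>i S. S = incident E ep i) q (send_along n ep x (incident E ep x) q)"
      using x(1) by (intro toppleI) auto
    define r' where "r' = r(x := r x - 1)"
    have "sum r' {1..n} < sum r {1..n}" unfolding r'_def using x(1) rx by (simp add: sum.remove)
    moreover have "r' 0 = 0" unfolding r'_def using x(1) less.prems(2) by simp
    moreover have "\<forall>j\<in>{1..n}. int (send_along n ep x (incident E ep x) q j) = int (s j) + laplacian r' j"
      using topple_laplacian_decrement[OF x(1) rx \<open>deg E ep x \<le> q x\<close> less.prems(3)] unfolding r'_def .
    ultimately show ?thesis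
      using less.hyps[of r' "send_along n ep x (incident E ep x) q"] send_along_config step
      by (meson converse_rtranclp_into_rtranclp)
  qed
qed

definition height :: "('e \<Rightarrow> nat) \<Rightarrow> nat \<Rightarrow> nat" where
  "height h v = card {z. (v, z) \<in> (arcs E ep h)\<^sup>+}"

context
  fixes h assumes h: "orientation E ep h"
begin

lemma height_less:
  assumes acyc: "acyclic (arcs E ep h)" and arc: "(x, z) \<in> arcs E ep h"
  shows "height h z < height h x"
proof -
  have "{w. (x, w) \<in> (arcs E ep h)\<^sup>+} \<subseteq> snd ` (arcs E ep h)\<^sup>+" by force
  then have "finite {w. (x, w) \<in> (arcs E ep h)\<^sup>+}"
    using finite_trancl finite_arcs[OF h] finite_subset by blast
  moreover have "{w. (z, w) \<in> (arcs E ep h)\<^sup>+} \<subset> {w. (x, w) \<in> (arcs E ep h)\<^sup>+}"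
    using arc acyc trancl_into_trancl2[OF arc] unfolding acyclic_def by blast
  ultimately show ?thesis unfolding height_def by (rule psubset_card_mono)
qed

lemma height_le: "height h v \<le> n + 1"
proof -
  have "{z. (v, z) \<in> (arcs E ep h)\<^sup>+} \<subseteq> {0..n}"
    using arcs_subset[OF h] by (force dest: tranclD2)
  then show ?thesis unfolding height_def using card_mono[of "{0..n}"] by fastforce
qed

lemma height_root: "is_root E ep h v \<Longrightarrow> height h v = 0"
proof -
  assume root: "is_root E ep h v"
  have "(v, z) \<notin> arcs E ep h" for z
  proof
    assume "(v, z) \<in> arcs E ep h"
    then obtain e where e: "e \<in> E" "tail h e = v" unfolding arcs_def tail_def by auto
    then show False using root tail_incident[OF h e(1)] tail_ne_head[OF h e(1)] unfolding is_root_def by auto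
  qed
  then show ?thesis unfolding height_def by (metis Collect_empty_eq card.empty tranclD)
qed

end

text \<open>Along an arc the subtracted power grows by a factor exceeding twice any degree, so at a
  non-root vertex the Laplacian is dominated by a single out-edge.\<close>
definition potential :: "('e \<Rightarrow> nat) \<Rightarrow> nat \<Rightarrow> nat" where
  "potential h v = (2 * card E + 2) ^ (n + 1) - (2 * card E + 2) ^ (n + 1 - height h v)"

lemma laplacian_potential_ge_deg:
  assumes h: "orientation E ep h" "acyclic (arcs E ep h)"
    and x: "x \<in> {1..n}" "\<not> is_root E ep h x"
  shows "int (deg E ep x) \<le> laplacian (potential h) x"
proof -
  define M where "M = 2 * card E + 2"
  define a where "a v = M ^ (n + 1 - height h v)" for v
  have "a v \<le> M ^ (n + 1)" for v unfolding a_def M_def by (intro power_increasing) auto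
  then have pot: "int (potential h v) = int (M ^ (n + 1)) - int (a v)" for v
    unfolding potential_def a_def M_def by (simp add: of_nat_diff)
  obtain e0 where e0: "e0 \<in> incident E ep x" "h e0 \<noteq> x" using x(2) unfolding is_root_def by blast
  have "height h (h e0) < height h x"
    using height_less[OF h arc_of_edge[OF h(1)]] e0 incident_subset tail_eqI[OF h(1)] by blast
  then have "Suc (n + 1 - height h x) \<le> n + 1 - height h (h e0)"
    using height_le[OF h(1), of x] by linarith
  then have "M ^ Suc (n + 1 - height h x) \<le> M ^ (n + 1 - height h (h e0))"
    unfolding M_def by (intro power_increasing) auto
  then have "M * a x \<le> a (other ep e0 x)"
    using head_cases[OF h(1) e0(1)] e0(2) unfolding a_def by auto
  then have "int M * int (a x) \<le> int (a (other ep e0 x))" by (metis of_nat_le_iff of_nat_mult)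
  moreover have "int (a (other ep e0 x)) \<le> (\<Sum>e\<in>incident E ep x. int (a (other ep e x)))"
    using e0(1) finite_incident by (intro member_le_sum) auto
  moreover have "laplacian (potential h) x = (\<Sum>e\<in>incident E ep x. int (a (other ep e x))) - int (deg E ep x) * int (a x)"
    unfolding laplacian_def pot deg_def by (simp add: sum_subtractf)
  moreover have "int (M - deg E ep x) = int M - int (deg E ep x)"
    using deg_le_card_edges[of x] unfolding M_def by simp
  ultimately have "int (M - deg E ep x) * int (a x) \<le> laplacian (potential h) x"
    by (simp add: left_diff_distrib)
  moreover have "1 \<le> a x" unfolding a_def M_def by simp
  then have "int (M - deg E ep x) \<le> int (M - deg E ep x) * int (a x)"
    by (metis mult.right_neutral mult_left_mono of_nat_0_le_iff of_nat_1 of_nat_le_iff)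
  moreover have "deg E ep x \<le> M - deg E ep x" using deg_le_card_edges[of x] unfolding M_def by simp
  ultimately show ?thesis by linarith
qed

lemma DR_iff_acyclic_sink_rooted_below:
  "DR n E ep c \<longleftrightarrow> stable n E ep c \<and>
     (\<exists>h. sink_rooted n E ep h \<and> acyclic_orientation E ep h \<and> (\<forall>i\<in>{1..n}. indeg E h i \<le> c i))"
proof
  assume "DR n E ep c"
  then show "stable n E ep c \<and>
     (\<exists>h. sink_rooted n E ep h \<and> acyclic_orientation E ep h \<and> (\<forall>i\<in>{1..n}. indeg E h i \<le> c i))"
    using acyclic_sink_rooted_below_if_DR unfolding DR_def recurrent_def by blast
next
  assume "stable n E ep c \<and>
     (\<exists>h. sink_rooted n E ep h \<and> acyclic_orientation E ep h \<and> (\<forall>i\<in>{1..n}. indeg E h i \<le> c i))"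
  then obtain h where c: "stable n E ep c" and h: "sink_rooted n E ep h" "acyclic (arcs E ep h)"
      "\<forall>i\<in>{1..n}. indeg E h i \<le> c i"
    unfolding acyclic_orientation_def by blast
  have o: "orientation E ep h" and root: "is_root E ep h 0" and not_root: "\<forall>v\<in>{1..n}. \<not> is_root E ep h v"
    using h(1) unfolding sink_rooted_def by auto
  have lap: "int (deg E ep j) \<le> laplacian (potential h) j" if "j \<in> {1..n}" for j
    using laplacian_potential_ge_deg[OF o h(2) that] not_root that by blast
  define u where "u j = (if j \<in> {1..n} then indeg E h j + nat (laplacian (potential h) j) else 0)" for j
  have u: "max_stable \<le> u" "is_config n u"
    using lap unfolding u_def max_stable_def le_fun_def is_config_def by fastforce+
  have "potential h 0 = 0" unfolding potential_def using height_root[OF o root] by simp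
  moreover have "\<forall>x\<in>{1..n}. int (u x) = int (indeg_config h x) + laplacian (potential h) x"
    using lap unfolding u_def indeg_config_def by fastforce
  moreover have "is_config n (indeg_config h)" "\<forall>i\<in>{1..n}. indeg E h i \<le> indeg_config h i"
    unfolding indeg_config_def is_config_def by auto
  ultimately have "(topple (\<lambda>i S. S = incident E ep i))\<^sup>*\<^sup>* u (indeg_config h)"
    using asm_topples_by_laplacian[OF o h(2)] u(2) by blast
  then show "DR n E ep c"
    unfolding DR_def asm_topple_eq using recurrent_if_topples_to_indeg_config[OF h(1) u _ c h(3)] by blast
qed

section \<open>Minimal recurrent states\<close>

lemma minimal_in_iff_indeg:
  assumes P: "\<And>c. P c \<longleftrightarrow> stable n E ep c \<and> (\<exists>h. sink_rooted n E ep h \<and> Q h \<and> (\<forall>i\<in>{1..n}. indeg E h i \<le> c i))"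
    and c: "stable n E ep c"
  shows "minimal_in P c \<longleftrightarrow> (\<exists>h. sink_rooted n E ep h \<and> Q h \<and> (\<forall>i\<in>{1..n}. c i = indeg E h i))"
proof
  assume min: "minimal_in P c"
  then obtain h where h: "sink_rooted n E ep h" "Q h" "\<forall>i\<in>{1..n}. indeg E h i \<le> c i"
    using P unfolding minimal_in_def by blast
  have "P (indeg_config h)"
    using P stable_indeg_config[OF h(1)] h(1,2) unfolding indeg_config_def by auto
  then have "indeg_config h = c"
    using min indeg_config_le[OF h(3)] unfolding minimal_in_def by blast
  then show "\<exists>h. sink_rooted n E ep h \<and> Q h \<and> (\<forall>i\<in>{1..n}. c i = indeg E h i)"
    using h unfolding indeg_config_def by auto
next
  assume "\<exists>h. sink_rooted n E ep h \<and> Q h \<and> (\<forall>i\<in>{1..n}. c i = indeg E h i)"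
  then obtain h where h: "sink_rooted n E ep h" "Q h" "\<forall>i\<in>{1..n}. c i = indeg E h i" by blast
  have "\<not> (P c' \<and> c' \<le> c \<and> c' \<noteq> c)" for c'
  proof
    assume c': "P c' \<and> c' \<le> c \<and> c' \<noteq> c"
    then obtain h' where h': "sink_rooted n E ep h'" "\<forall>i\<in>{1..n}. indeg E h' i \<le> c' i"
        and "stable n E ep c'"
      using P by blast
    then have "\<exists>j\<in>{1..n}. c' j \<noteq> c j"
      using c' c config_eqI unfolding stable_def by metis
    then have "(\<Sum>i\<in>{1..n}. c' i) < (\<Sum>i\<in>{1..n}. c i)"
      using c' unfolding le_fun_def by (intro sum_strict_mono_ex1) (auto simp: order.strict_iff_order)
    moreover have "(\<Sum>i\<in>{1..n}. indeg E h' i) \<le> (\<Sum>i\<in>{1..n}. c' i)"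
      using h'(2) by (intro sum_mono) blast
    moreover have "(\<Sum>i\<in>{1..n}. indeg E h i) = (\<Sum>i\<in>{1..n}. indeg E h' i)"
      using sum_indeg h(1) h'(1) unfolding sink_rooted_def by (metis add_right_cancel)
    ultimately show False using h(3) by simp
  qed
  moreover have "P c" using P c h by fastforce
  ultimately show "minimal_in P c" unfolding minimal_in_def by blast
qed

lemma score_equiv_if_indeg_eq:
  assumes "sink_rooted n E ep h1" "sink_rooted n E ep h2" "\<forall>i\<in>{1..n}. indeg E h1 i = indeg E h2 i"
  shows "score_equiv n E h1 h2"
  unfolding score_equiv_def
proof (intro allI impI)
  fix v assume "v \<le> n"
  then show "indeg E h1 v = indeg E h2 v"
    using assms indeg_root unfolding sink_rooted_def by (cases "v = 0") auto
qed

lemma card_disagreeing_heads: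
  assumes "indeg E h1 v = indeg E h2 v"
  shows "card {e \<in> E. h1 e \<noteq> h2 e \<and> h1 e = v} = card {e \<in> E. h1 e \<noteq> h2 e \<and> h2 e = v}"
proof -
  have split: "indeg E h v = card {e \<in> E. h1 e = h2 e \<and> h1 e = v} + card {e \<in> E. h1 e \<noteq> h2 e \<and> h e = v}"
    if "h = h1 \<or> h = h2" for h
  proof -
    have "{e \<in> E. h e = v} = {e \<in> E. h1 e = h2 e \<and> h1 e = v} \<union> {e \<in> E. h1 e \<noteq> h2 e \<and> h e = v}"
      using that by auto
    moreover have "{e \<in> E. h1 e = h2 e \<and> h1 e = v} \<inter> {e \<in> E. h1 e \<noteq> h2 e \<and> h e = v} = {}" by blast
    ultimately show ?thesis unfolding indeg_def using finite_edges by (simp add: card_Un_disjoint)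
  qed
  have "indeg E h1 v = card {e \<in> E. h1 e = h2 e \<and> h1 e = v} + card {e \<in> E. h1 e \<noteq> h2 e \<and> h1 e = v}"
    "indeg E h2 v = card {e \<in> E. h1 e = h2 e \<and> h1 e = v} + card {e \<in> E. h1 e \<noteq> h2 e \<and> h2 e = v}"
    using split by blast+
  then show ?thesis using assms by linarith
qed

lemma orientation_eq_if_acyclic_indeg_eq:
  assumes h1: "orientation E ep h1" "acyclic (arcs E ep h1)" and h2: "orientation E ep h2"
    and indeg_eq: "\<forall>v\<le>n. indeg E h1 v = indeg E h2 v"
  shows "\<forall>e\<in>E. h1 e = h2 e"
proof (rule ccontr)
  define D where "D = {e \<in> E. h1 e \<noteq> h2 e}"
  assume "\<not> (\<forall>e\<in>E. h1 e = h2 e)"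
  then obtain e1 where e1: "e1 \<in> D" unfolding D_def by blast
  have flipped: "h2 e = tail h1 e" if "e \<in> D" for e
    using that head_cases[OF h2 head_incident[OF h1(1)]] unfolding D_def tail_def by force
  define A where "A = (\<lambda>e. (tail h1 e, h1 e)) ` D"
  have "A \<subseteq> arcs E ep h1" using arc_of_edge[OF h1(1)] unfolding A_def D_def by auto
  then have "finite A" "acyclic A" using finite_arcs[OF h1(1)] acyclic_subset[OF h1(2)] finite_subset by auto
  then have wf: "wf (A\<inverse>)" by (rule finite_acyclic_wf_converse)
  have successor: "\<exists>y. (v, y) \<in> A \<and> y \<in> Range A" if "v \<in> Range A" for v
  proof -
    from that obtain e where e: "e \<in> D" "h1 e = v" unfolding A_def by auto
    then have "v \<le> n" using head_le[OF h1(1)] unfolding D_def by auto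
    moreover have "card {e \<in> E. h1 e \<noteq> h2 e \<and> h1 e = v} \<noteq> 0"
      using e finite_edges unfolding D_def by (auto simp: card_eq_0_iff)
    ultimately have "card {e \<in> E. h1 e \<noteq> h2 e \<and> h2 e = v} \<noteq> 0"
      using card_disagreeing_heads[of h1 v h2] indeg_eq by simp
    then have "{e \<in> E. h1 e \<noteq> h2 e \<and> h2 e = v} \<noteq> {}" by (metis card.empty)
    then obtain e' where e': "e' \<in> D" "h2 e' = v" unfolding D_def by blast
    then have "(v, h1 e') \<in> A" using flipped unfolding A_def by force
    then show ?thesis by blast
  qed
  have "h1 e1 \<in> Range A" using e1 unfolding A_def by force
  then obtain z where "z \<in> Range A" "\<forall>y. (y, z) \<in> A\<inverse> \<longrightarrow> y \<notin> Range A"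
    using wf unfolding wf_eq_minimal by metis
  then show False using successor by blast
qed

end

theorem theorem2p4:
  fixes n :: nat and E :: "'e set" and ep :: "'e \<Rightarrow> nat \<times> nat" and c :: "nat \<Rightarrow> nat"
  assumes "valid_graph n E ep"
    and "stable n E ep c"
  shows "(minimal_in (SR n E ep) c \<longleftrightarrow>
            (\<exists>h. sink_rooted n E ep h \<and> (\<forall>i\<in>{1..n}. c i = indeg E h i)))
       \<and> (minimal_in (DR n E ep) c \<longleftrightarrow>
            (\<exists>h. sink_rooted n E ep h \<and> acyclic_orientation E ep h
                 \<and> (\<forall>i\<in>{1..n}. c i = indeg E h i)))
       \<and> (minimal_in (SR n E ep) c \<longrightarrow>
            (\<forall>h1 h2. sink_rooted n E ep h1 \<and> (\<forall>i\<in>{1..n}. c i = indeg E h1 i)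
                   \<and> sink_rooted n E ep h2 \<and> (\<forall>i\<in>{1..n}. c i = indeg E h2 i)
                   \<longrightarrow> score_equiv n E h1 h2))
       \<and> (minimal_in (DR n E ep) c \<longrightarrow>
            (\<forall>h1 h2. sink_rooted n E ep h1 \<and> acyclic_orientation E ep h1
                     \<and> (\<forall>i\<in>{1..n}. c i = indeg E h1 i)
                   \<and> sink_rooted n E ep h2 \<and> acyclic_orientation E ep h2
                     \<and> (\<forall>i\<in>{1..n}. c i = indeg E h2 i)
                   \<longrightarrow> (\<forall>e\<in>E. h1 e = h2 e)))"
proof -
  interpret sandpile_graph n E ep by (rule sandpile_graph.intro[OF assms(1)])
  have SR: "minimal_in (SR n E ep) c \<longleftrightarrow>
      (\<exists>h. sink_rooted n E ep h \<and> (\<forall>i\<in>{1..n}. c i = indeg E h i))"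
    using minimal_in_iff_indeg[of "SR n E ep" "\<lambda>_. True", OF _ assms(2)] SR_iff_sink_rooted_below
    by simp
  have DR: "minimal_in (DR n E ep) c \<longleftrightarrow>
      (\<exists>h. sink_rooted n E ep h \<and> acyclic_orientation E ep h \<and> (\<forall>i\<in>{1..n}. c i = indeg E h i))"
    using minimal_in_iff_indeg[OF DR_iff_acyclic_sink_rooted_below assms(2)] .
  have score: "score_equiv n E h1 h2"
    if "sink_rooted n E ep h1" "sink_rooted n E ep h2" "\<forall>i\<in>{1..n}. c i = indeg E h1 i"
      "\<forall>i\<in>{1..n}. c i = indeg E h2 i" for h1 h2
    using score_equiv_if_indeg_eq that by simp
  have unique: "\<forall>e\<in>E. h1 e = h2 e"
    if "sink_rooted n E ep h1" "acyclic_orientation E ep h1" "\<forall>i\<in>{1..n}. c i = indeg E h1 i"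
      "sink_rooted n E ep h2" "\<forall>i\<in>{1..n}. c i = indeg E h2 i" for h1 h2
  proof -
    have "\<forall>v\<le>n. indeg E h1 v = indeg E h2 v"
      using score[OF that(1,4,3,5)] unfolding score_equiv_def .
    then show ?thesis
      using orientation_eq_if_acyclic_indeg_eq[of h1 h2] that
      unfolding sink_rooted_def acyclic_orientation_def by blast
  qed
  show ?thesis using SR DR score unique by (intro conjI) blast+
qed

end
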